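(* Let $m,n$ be positive integers, let $D$ be an $m\times n$ diagram, and let $\sigma\in S_{m+n}$ be its restricted permutation. Then $\ker(P_\omega+P_\sigma)\cong\ker(M(D))$ as $\mathbb{Q}$-vector spaces; in particular they have the same dimension.
   Context: An $m\times n$ diagram is an $m\times n$ grid of squares, each coloured black or white. Rows are numbered top to bottom and columns left to right. Pipe dreams: on each white square place two arcs, one joining its bottom and left edge midpoints and one joining its top and right edge midpoints. On each black square place a cross, i.e. a vertical segment joining its bottom and top midpoints and a horizontal segment joining its left and right midpoints. Label the boundary as follows: the row that is $r$-th from the bottom gets label $r$ at its left end and $n+r$ at its right end; column $j$ gets label $m+j$ at its top and $j$ at its bottom. The restricted permutation $\sigma$ of $D$ sends a label $i$ on the bottom or right side to the label on the left or top side where the pipe entering at $i$ exits (going straight through crosses). The permutation $\omega$ is defined by $\omega(i)=m+i$ for $1\le i\le n$ and $\omega(i)=i-n$ for $n<i\le m+n$. For $\mu\in S_k$, $P_\mu$ is the $k\times k$ matrix with $P_\mu[i,j]=\delta_{j,\mu(i)}$. If $D$ has $N$ white squares, label them bijectively by $[N]$. Then $M(D)$ is the $N\times N$ skew-symmetric matrix whose entries are as follows. $M(D)[i,j]=1$ if white square $i$ lies strictly below square $j$ in the same column or strictly to the right of square $j$ in the same row. $M(D)[i,j]=-1$ if square $i$ lies strictly above square $j$ in the same column or strictly to the left of it in the same row. $M(D)[i,j]=0$ otherwise. *)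

theory Defs
  imports "Jordan_Normal_Form.Matrix_Kernel"
begin

(* An m x n diagram is a predicate D :: nat => nat => bool on rows 1..m (top to bottom)
   and columns 1..n (left to right); D i j = True means square (i,j) is black. *)

definition white_squares :: "(nat \<Rightarrow> nat \<Rightarrow> bool) \<Rightarrow> nat \<Rightarrow> nat \<Rightarrow> (nat \<times> nat) set" where
  "white_squares D m n = {(i,j). 1 \<le> i \<and> i \<le> m \<and> 1 \<le> j \<and> j \<le> n \<and> \<not> D i j}"

(* The pipe is entering square (i,j); up = True means it enters through
   the bottom edge (travelling upwards), up = False means through the right edge
   (travelling leftwards).  i = 0 means it has left through the top edge in column j
   (label m + j); j = 0 means it has left through the left edge in row i
   (row i is the (m+1-i)-th from the bottom, label m + 1 - i).
   White square: bottom<->left, right<->top; black square: straight through. *)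
function pipe_exit :: "(nat \<Rightarrow> nat \<Rightarrow> bool) \<Rightarrow> nat \<Rightarrow> nat \<Rightarrow> nat \<Rightarrow> bool \<Rightarrow> nat" where
  "pipe_exit D m i j up =
     (if i = 0 then m + j
      else if j = 0 then m + 1 - i
      else (let up' = (if D i j then up else \<not> up) in
            if up' then pipe_exit D m (i - 1) j True
            else pipe_exit D m i (j - 1) False))"
  by pat_completeness auto
termination
  by (relation "measure (\<lambda>(D, m, i, j, up). i + j)") auto

(* restricted permutation: label k in 1..n is the bottom of column k,
   label n + r (1 <= r <= m) is the right end of the r-th row from the bottom,
   i.e. of row m + 1 - r. *)
definition restricted_perm :: "(nat \<Rightarrow> nat \<Rightarrow> bool) \<Rightarrow> nat \<Rightarrow> nat \<Rightarrow> nat \<Rightarrow> nat" where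
  "restricted_perm D m n k =
     (if k \<le> n then pipe_exit D m m k True
      else pipe_exit D m (m + n + 1 - k) n False)"

definition omega_perm :: "nat \<Rightarrow> nat \<Rightarrow> nat \<Rightarrow> nat" where
  "omega_perm m n i = (if i \<le> n then m + i else i - n)"

(* P_mu as a k x k rational matrix; entry (i,j) (1-based) is delta_{j, mu(i)};
   JNF matrices are 0-based, hence the shifts. *)
definition perm_matrix :: "nat \<Rightarrow> (nat \<Rightarrow> nat) \<Rightarrow> rat mat" where
  "perm_matrix k \<mu> = mat k k (\<lambda>(i, j). if j + 1 = \<mu> (i + 1) then 1 else 0)"

definition diagram_matrix :: "nat \<Rightarrow> (nat \<Rightarrow> nat \<times> nat) \<Rightarrow> rat mat" where
  "diagram_matrix N w = mat N N (\<lambda>(a, b).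
     (let (ia, ja) = w a; (ib, jb) = w b in
      if (ja = jb \<and> ia > ib) \<or> (ia = ib \<and> ja > jb) then 1
      else if (ja = jb \<and> ia < ib) \<or> (ia = ib \<and> ja < jb) then -1
      else 0))"

end

(* Transport a vector x of boundary values along the pipes, so that every edge of the grid carries
   the value of the label where its pipe leaves the diagram.  Since omega pairs the two ends of
   each row and each column and sigma the two ends of each pipe, x lies in ker(P_omega + P_sigma)
   exactly when the values at the two ends of each row, and of each column, cancel.  The map sends
   x to its horizontal increments h(i,j) - h(i,j-1) at the white squares.  At every square the
   horizontal increment equals the vertical decrement, so the entry of M(D) at a white square
   telescopes along its row and column to the boundary values, and vanishes.  Conversely a kernel
   vector of M(D) integrates, by partial row and column sums shifted by half the full sums, to an
   edge labelling that obeys the pipe rules, which is transported back to the boundary. *)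

theory Submission
  imports Defs
begin

subsection \<open>Kernels of permutation matrices\<close>

lemma kernel_dim_eq_if_linear_bij_betw:
  fixes A B :: "'a::field mat" and f :: "'a vec \<Rightarrow> 'a vec"
  assumes A: "A \<in> carrier_mat r1 c1" and B: "B \<in> carrier_mat r2 c2"
    and bij: "bij_betw f (mat_kernel A) (mat_kernel B)"
    and add: "\<forall>x \<in> mat_kernel A. \<forall>y \<in> mat_kernel A. f (x + y) = f x + f y"
    and smult: "\<forall>c. \<forall>x \<in> mat_kernel A. f (c \<cdot>\<^sub>v x) = c \<cdot>\<^sub>v f x"
  shows "kernel_dim A = kernel_dim B"
proof -
  interpret KA: kernel r1 c1 A by (unfold_locales, rule A)
  interpret KB: kernel r2 c2 B by (unfold_locales, rule B)
  interpret L: linear_map class_ring KA.VK KB.VK f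
  proof unfold_locales
    show "f \<in> LinearCombinations.module_hom class_ring KA.VK KB.VK"
      unfolding LinearCombinations.module_hom_def using bij add smult by (auto simp: bij_betw_def)
  qed
  obtain bas where "finite bas" "KA.basis bas" using kernel_basis_exists[OF A] by auto
  then have "KA.Ker.fin_dim" unfolding KA.Ker.fin_dim_def KA.Ker.basis_def by auto
  then have "KA.dim = KB.dim"
    by (rule L.dim_eq) (use bij in \<open>auto simp: bij_betw_def\<close>)
  then show ?thesis using A B by simp
qed

lemma mat_kernel_iff_mult_vec_index:
  assumes "A \<in> carrier_mat r c" and "x \<in> carrier_vec c"
  shows "x \<in> mat_kernel A \<longleftrightarrow> (\<forall>i<r. (A *\<^sub>v x) $ i = 0)"
  using assms by (simp add: mat_kernel vec_eq_iff del: index_mult_mat_vec)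

lemma perm_matrix_carrier [simp]: "perm_matrix k \<mu> \<in> carrier_mat k k"
  by (simp add: perm_matrix_def)

lemma perm_matrix_mult_vec_index:
  assumes x: "x \<in> carrier_vec k" and i: "i < k" and \<mu>: "\<mu> (i + 1) \<in> {1..k}"
  shows "(perm_matrix k \<mu> *\<^sub>v x) $ i = x $ (\<mu> (i + 1) - 1)"
proof -
  have "(perm_matrix k \<mu> *\<^sub>v x) $ i = (\<Sum>j\<in>{0..<k}. (if j + 1 = \<mu> (i + 1) then 1 else 0) * x $ j)"
    using x i by (simp add: perm_matrix_def scalar_prod_def)
  also have "\<dots> = (\<Sum>j\<in>{0..<k}. if j = \<mu> (i + 1) - 1 then x $ j else 0)"
    using \<mu> by (intro sum.cong) auto
  also have "\<dots> = x $ (\<mu> (i + 1) - 1)"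
    using \<mu> by auto
  finally show ?thesis .
qed

lemma mat_kernel_perm_matrix_add_iff:
  assumes x: "x \<in> carrier_vec k"
    and \<mu>: "\<mu> ` {1..k} \<subseteq> {1..k}" and \<nu>: "\<nu> ` {1..k} \<subseteq> {1..k}"
  shows "x \<in> mat_kernel (perm_matrix k \<mu> + perm_matrix k \<nu>)
    \<longleftrightarrow> (\<forall>i<k. x $ (\<mu> (i + 1) - 1) + x $ (\<nu> (i + 1) - 1) = 0)"
proof -
  have P: "perm_matrix k \<mu> + perm_matrix k \<nu> \<in> carrier_mat k k"
    by simp
  have row: "((perm_matrix k \<mu> + perm_matrix k \<nu>) *\<^sub>v x) $ i = x $ (\<mu> (i + 1) - 1) + x $ (\<nu> (i + 1) - 1)"
    if i: "i < k" for i
  proof -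
    have "\<mu> (i + 1) \<in> {1..k}" "\<nu> (i + 1) \<in> {1..k}" using i \<mu> \<nu> by (auto simp: image_subset_iff)
    then show ?thesis
      using x i perm_matrix_mult_vec_index[OF x i]
      by (simp add: add_mult_distrib_mat_vec[OF perm_matrix_carrier perm_matrix_carrier x]
          carrier_matD[OF perm_matrix_carrier] del: index_mult_mat_vec)
  qed
  show ?thesis
    unfolding mat_kernel_iff_mult_vec_index[OF P x] using row by (simp del: index_mult_mat_vec)
qed

subsection \<open>Pipes\<close>

lemma pipe_exit_top: "pipe_exit D m 0 j up = m + j"
  by (subst pipe_exit.simps) simp

lemma pipe_exit_left: "i \<noteq> 0 \<Longrightarrow> pipe_exit D m i 0 up = m + 1 - i"
  by (subst pipe_exit.simps) simp

lemma pipe_exit_square: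
  "i \<noteq> 0 \<Longrightarrow> j \<noteq> 0 \<Longrightarrow> pipe_exit D m i j up =
     (if (if D i j then up else \<not> up) then pipe_exit D m (i - 1) j True
      else pipe_exit D m i (j - 1) False)"
  by (subst pipe_exit.simps) (simp add: Let_def)

declare pipe_exit.simps [simp del]

lemma pipe_exit_range:
  "1 \<le> m \<Longrightarrow> i \<le> m \<Longrightarrow> j \<le> n \<Longrightarrow> pipe_exit D m i j up \<in> {1..m + n}"
proof (induction D m i j up rule: pipe_exit.induct)
  case (1 D m i j up)
  then show ?case
    by (cases "i = 0"; cases "j = 0") (auto simp: pipe_exit_top pipe_exit_left pipe_exit_square)
qed

lemma omega_perm_range: "omega_perm m n ` {1..m + n} \<subseteq> {1..m + n}"
  by (auto simp: omega_perm_def)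

lemma restricted_perm_range:
  assumes "1 \<le> m" shows "restricted_perm D m n ` {1..m + n} \<subseteq> {1..m + n}"
proof (intro image_subsetI)
  fix k assume "k \<in> {1..m + n}"
  then show "restricted_perm D m n k \<in> {1..m + n}"
    using assms pipe_exit_range[of m m k n D True] pipe_exit_range[of m "m + n + 1 - k" n n D False]
    by (auto simp: restricted_perm_def)
qed

text \<open>\<open>hor_val D m x i j\<close> is the value carried across the right edge of square \<open>(i, j)\<close> (for
  \<open>j = 0\<close>: the left end of row \<open>i\<close>), \<open>ver_val D m x i j\<close> the value carried across its bottom
  edge (for \<open>i = 0\<close>: the top of column \<open>j\<close>).\<close>

definition hor_val :: "(nat \<Rightarrow> nat \<Rightarrow> bool) \<Rightarrow> nat \<Rightarrow> rat vec \<Rightarrow> nat \<Rightarrow> nat \<Rightarrow> rat" where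
  "hor_val D m x i j = x $ (pipe_exit D m i j False - 1)"

definition ver_val :: "(nat \<Rightarrow> nat \<Rightarrow> bool) \<Rightarrow> nat \<Rightarrow> rat vec \<Rightarrow> nat \<Rightarrow> nat \<Rightarrow> rat" where
  "ver_val D m x i j = x $ (pipe_exit D m i j True - 1)"

definition crossing_rules ::
    "(nat \<Rightarrow> nat \<Rightarrow> bool) \<Rightarrow> nat \<Rightarrow> nat \<Rightarrow> (nat \<Rightarrow> nat \<Rightarrow> rat) \<Rightarrow> (nat \<Rightarrow> nat \<Rightarrow> rat) \<Rightarrow> bool" where
  "crossing_rules D m n h v \<longleftrightarrow> (\<forall>i j. 1 \<le> i \<and> i \<le> m \<and> 1 \<le> j \<and> j \<le> n \<longrightarrow>
     (if D i j then h i j = h i (j - 1) \<and> v (i - 1) j = v i j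
      else v i j = h i (j - 1) \<and> v (i - 1) j = h i j))"

definition boundary_cancels :: "nat \<Rightarrow> nat \<Rightarrow> (nat \<Rightarrow> nat \<Rightarrow> rat) \<Rightarrow> (nat \<Rightarrow> nat \<Rightarrow> rat) \<Rightarrow> bool" where
  "boundary_cancels m n h v \<longleftrightarrow>
     (\<forall>i. 1 \<le> i \<and> i \<le> m \<longrightarrow> h i 0 + h i n = 0) \<and> (\<forall>j. 1 \<le> j \<and> j \<le> n \<longrightarrow> v 0 j + v m j = 0)"

lemma crossing_rules_pipe_values: "crossing_rules D m n (hor_val D m x) (ver_val D m x)"
  unfolding crossing_rules_def hor_val_def ver_val_def by (auto simp: pipe_exit_square)

lemma crossing_rulesD:
  assumes "crossing_rules D m n h v" "1 \<le> i" "i \<le> m" "1 \<le> j" "j \<le> n"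
  shows "D i j \<Longrightarrow> h i j = h i (j - 1) \<and> v (i - 1) j = v i j"
    and "\<not> D i j \<Longrightarrow> v i j = h i (j - 1) \<and> v (i - 1) j = h i j"
proof -
  have "if D i j then h i j = h i (j - 1) \<and> v (i - 1) j = v i j
        else v i j = h i (j - 1) \<and> v (i - 1) j = h i j"
    using assms unfolding crossing_rules_def by blast
  then show "D i j \<Longrightarrow> h i j = h i (j - 1) \<and> v (i - 1) j = v i j"
    and "\<not> D i j \<Longrightarrow> v i j = h i (j - 1) \<and> v (i - 1) j = h i j"
    by simp_all
qed

lemma crossing_rules_diff_eq:
  assumes "crossing_rules D m n h v" "1 \<le> i" "i \<le> m" "1 \<le> j" "j \<le> n"
  shows "h i j - h i (j - 1) = v (i - 1) j - v i j"
  using crossing_rulesD[OF assms] by (cases "D i j") auto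

lemma hor_val_left: "1 \<le> i \<Longrightarrow> hor_val D m x i 0 = x $ (m - i)"
  by (simp add: hor_val_def pipe_exit_left)

lemma ver_val_top: "1 \<le> j \<Longrightarrow> ver_val D m x 0 j = x $ (m + j - 1)"
  by (simp add: ver_val_def pipe_exit_top)

abbreviation pipe_matrix :: "(nat \<Rightarrow> nat \<Rightarrow> bool) \<Rightarrow> nat \<Rightarrow> nat \<Rightarrow> rat mat" where
  "pipe_matrix D m n \<equiv> perm_matrix (m + n) (omega_perm m n) + perm_matrix (m + n) (restricted_perm D m n)"

lemma pipe_matrix_carrier: "pipe_matrix D m n \<in> carrier_mat (m + n) (m + n)"
  by simp

lemma pipe_matrix_equation_column:
  assumes "k < n"
  shows "x $ (omega_perm m n (k + 1) - 1) + x $ (restricted_perm D m n (k + 1) - 1)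
    = ver_val D m x 0 (k + 1) + ver_val D m x m (k + 1)"
  using assms by (simp add: ver_val_def omega_perm_def restricted_perm_def pipe_exit_top add.commute)

lemma pipe_matrix_equation_row:
  assumes "n \<le> k" "k < m + n"
  shows "x $ (omega_perm m n (k + 1) - 1) + x $ (restricted_perm D m n (k + 1) - 1)
    = hor_val D m x (m + n - k) 0 + hor_val D m x (m + n - k) n"
proof -
  have "m - (m + n - k) = k - n" "m + n + 1 - (k + 1) = m + n - k" "m + n - k \<noteq> 0"
    using assms by auto
  with assms show ?thesis
    by (simp add: hor_val_def omega_perm_def restricted_perm_def pipe_exit_left)
qed

lemma mat_kernel_pipe_matrix_iff:
  assumes m: "1 \<le> m" and x: "x \<in> carrier_vec (m + n)"
  shows "x \<in> mat_kernel (pipe_matrix D m n) \<longleftrightarrow> boundary_cancels m n (hor_val D m x) (ver_val D m x)"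
proof -
  let ?E = "\<lambda>k. x $ (omega_perm m n (k + 1) - 1) + x $ (restricted_perm D m n (k + 1) - 1)"
  have "x \<in> mat_kernel (pipe_matrix D m n) \<longleftrightarrow> (\<forall>k<m + n. ?E k = 0)"
    by (rule mat_kernel_perm_matrix_add_iff[OF x omega_perm_range restricted_perm_range[OF m]])
  also have "\<dots> \<longleftrightarrow> boundary_cancels m n (hor_val D m x) (ver_val D m x)"
  proof
    assume E: "\<forall>k<m + n. ?E k = 0"
    show "boundary_cancels m n (hor_val D m x) (ver_val D m x)"
      unfolding boundary_cancels_def
    proof (intro conjI allI impI)
      fix i assume "1 \<le> i \<and> i \<le> m"
      then have "n \<le> m + n - i" "m + n - i < m + n" "m + n - (m + n - i) = i" by auto
      then show "hor_val D m x i 0 + hor_val D m x i n = 0"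
        using E[rule_format, of "m + n - i"] pipe_matrix_equation_row[of n "m + n - i" m x D] by simp
    next
      fix j assume "1 \<le> j \<and> j \<le> n"
      then have "j - 1 < n" "j - 1 < m + n" "j - 1 + 1 = j" by auto
      then show "ver_val D m x 0 j + ver_val D m x m j = 0"
        using E[rule_format, of "j - 1"] pipe_matrix_equation_column[of "j - 1" n x m D] by simp
    qed
  next
    assume B: "boundary_cancels m n (hor_val D m x) (ver_val D m x)"
    show "\<forall>k<m + n. ?E k = 0"
    proof (intro allI impI)
      fix k assume k: "k < m + n"
      show "?E k = 0"
      proof (cases "k < n")
        case True
        with B show ?thesis
          using pipe_matrix_equation_column[OF True, of x m D] by (simp add: boundary_cancels_def)
      next
        case False
        with k have "1 \<le> m + n - k" "m + n - k \<le> m" by auto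
        with B show ?thesis
          using pipe_matrix_equation_row[of n k m x D] False k by (simp add: boundary_cancels_def)
      qed
    qed
  qed
  finally show ?thesis .
qed

subsection \<open>The diagram matrix\<close>

definition cross_sign :: "nat \<times> nat \<Rightarrow> nat \<times> nat \<Rightarrow> rat" where
  "cross_sign p q = (let (ia, ja) = p; (ib, jb) = q in
      if (ja = jb \<and> ia > ib) \<or> (ia = ib \<and> ja > jb) then 1
      else if (ja = jb \<and> ia < ib) \<or> (ia = ib \<and> ja < jb) then -1
      else 0)"

lemma dim_diagram_matrix [simp]:
  "dim_row (diagram_matrix N w) = N" "dim_col (diagram_matrix N w) = N"
  by (simp_all add: diagram_matrix_def)

lemma diagram_matrix_carrier [simp]: "diagram_matrix N w \<in> carrier_mat N N"
  by (simp add: diagram_matrix_def)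

lemma diagram_matrix_index: "a < N \<Longrightarrow> b < N \<Longrightarrow> diagram_matrix N w $$ (a, b) = cross_sign (w a) (w b)"
  by (simp add: diagram_matrix_def cross_sign_def)

lemma cross_sign_mult:
  "cross_sign (i, j) (i', j') * x =
     (if j' = j \<and> i' < i then x else 0) + (if i' = i \<and> j' < j then x else 0)
   - (if j' = j \<and> i < i' then x else 0) - (if i' = i \<and> j < j' then x else 0)"
  by (auto simp: cross_sign_def)

text \<open>The entry of \<open>M(D) d\<close> at the white square \<open>(i, j)\<close>, for \<open>e\<close> the extension of \<open>d\<close> by zero
  to the black squares.\<close>

definition cross_balance :: "(nat \<Rightarrow> nat \<Rightarrow> rat) \<Rightarrow> nat \<Rightarrow> nat \<Rightarrow> nat \<Rightarrow> nat \<Rightarrow> rat" where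
  "cross_balance e m n i j = (\<Sum>i'\<in>{1..<i}. e i' j) + (\<Sum>j'\<in>{1..<j}. e i j')
     - (\<Sum>i'\<in>{i<..m}. e i' j) - (\<Sum>j'\<in>{j<..n}. e i j')"

lemma sum_if_eq_and:
  "finite B \<Longrightarrow> j \<in> B \<Longrightarrow> (\<Sum>j'\<in>B. if j' = j \<and> P then f j' else 0) = (if P then f j else 0)"
  by (simp add: sum.delta cong: conj_cong)

lemma sum_if_less_atLeastAtMost:
  "i \<le> Suc m \<Longrightarrow> (\<Sum>i'\<in>{1..m}. if i' < i then f i' else 0) = (\<Sum>i'\<in>{1..<i}. f i')"
  by (simp add: sum.inter_filter[symmetric]) (intro sum.cong; auto)

lemma sum_if_greater_atLeastAtMost:
  "(\<Sum>i'\<in>{1..m}. if (i::nat) < i' then f i' else 0) = (\<Sum>i'\<in>{i<..m}. f i')"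
  by (simp add: sum.inter_filter[symmetric]) (intro sum.cong; auto)

lemma sum_cross_sign_grid:
  assumes i: "1 \<le> i" "i \<le> m" and j: "1 \<le> j" "j \<le> n"
  shows "(\<Sum>s\<in>{1..m} \<times> {1..n}. cross_sign (i, j) s * e (fst s) (snd s)) = cross_balance e m n i j"
proof -
  have "(\<Sum>s\<in>{1..m} \<times> {1..n}. cross_sign (i, j) s * e (fst s) (snd s))
     = (\<Sum>i'\<in>{1..m}. \<Sum>j'\<in>{1..n}. cross_sign (i, j) (i', j') * e i' j')"
    by (simp add: sum.cartesian_product split_def)
  also have "\<dots> = (\<Sum>i'\<in>{1..m}. (\<Sum>j'\<in>{1..n}. if j' = j \<and> i' < i then e i' j' else 0)
      + (\<Sum>j'\<in>{1..n}. if i' = i \<and> j' < j then e i' j' else 0)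
      - (\<Sum>j'\<in>{1..n}. if j' = j \<and> i < i' then e i' j' else 0)
      - (\<Sum>j'\<in>{1..n}. if i' = i \<and> j < j' then e i' j' else 0))"
    by (simp only: cross_sign_mult sum.distrib sum_subtractf)
  also have "\<dots> = (\<Sum>i'\<in>{1..m}. (if i' < i then e i' j else 0)
      + (if i' = i then (\<Sum>j'\<in>{1..n}. if j' < j then e i j' else 0) else 0)
      - (if i < i' then e i' j else 0)
      - (if i' = i then (\<Sum>j'\<in>{1..n}. if j < j' then e i j' else 0) else 0))"
    using j by (intro sum.cong refl) (auto simp: sum_if_eq_and)
  also have "\<dots> = (\<Sum>i'\<in>{1..m}. if i' < i then e i' j else 0)
      + (\<Sum>j'\<in>{1..n}. if j' < j then e i j' else 0)
      - (\<Sum>i'\<in>{1..m}. if i < i' then e i' j else 0)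
      - (\<Sum>j'\<in>{1..n}. if j < j' then e i j' else 0)"
    using i by (simp add: sum.distrib sum_subtractf)
  also have "\<dots> = cross_balance e m n i j"
    using sum_if_less_atLeastAtMost[where i=i and m=m and f="\<lambda>i'. e i' j"]
      sum_if_less_atLeastAtMost[where i=j and m=n and f="e i"]
      sum_if_greater_atLeastAtMost[where i=i and m=m and f="\<lambda>i'. e i' j"]
      sum_if_greater_atLeastAtMost[where i=j and m=n and f="e i"] i j
    by (simp add: cross_balance_def)
  finally show ?thesis .
qed

lemma white_squares_bounds:
  fixes N :: nat
  assumes "bij_betw w {0..<N} (white_squares D m n)" and "a < N"
  shows "1 \<le> fst (w a)" "fst (w a) \<le> m" "1 \<le> snd (w a)" "snd (w a) \<le> n" "\<not> D (fst (w a)) (snd (w a))"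
proof -
  have "w a \<in> white_squares D m n" using bij_betwE[OF assms(1)] assms(2) by auto
  then show "1 \<le> fst (w a)" "fst (w a) \<le> m" "1 \<le> snd (w a)" "snd (w a) \<le> n"
    "\<not> D (fst (w a)) (snd (w a))"
    by (auto simp: white_squares_def split: prod.splits)
qed

lemma diagram_matrix_mult_vec_index:
  assumes bij: "bij_betw w {0..<N} (white_squares D m n)"
    and d: "d \<in> carrier_vec N"
    and white: "\<forall>b<N. e (fst (w b)) (snd (w b)) = d $ b"
    and black: "\<forall>i j. 1 \<le> i \<and> i \<le> m \<and> 1 \<le> j \<and> j \<le> n \<and> D i j \<longrightarrow> e i j = 0"
    and a: "a < N"
  shows "(diagram_matrix N w *\<^sub>v d) $ a = cross_balance e m n (fst (w a)) (snd (w a))"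
proof -
  let ?g = "\<lambda>s. cross_sign (w a) s * e (fst s) (snd s)"
  have "(diagram_matrix N w *\<^sub>v d) $ a = (\<Sum>b\<in>{0..<N}. diagram_matrix N w $$ (a, b) * d $ b)"
    using d a by (simp add: scalar_prod_def)
  also have "\<dots> = (\<Sum>b\<in>{0..<N}. ?g (w b))"
    using a white by (auto simp: diagram_matrix_index intro!: sum.cong)
  also have "\<dots> = sum ?g (white_squares D m n)"
    by (rule sum.reindex_bij_betw[OF bij])
  also have "\<dots> = sum ?g ({1..m} \<times> {1..n})"
    by (rule sum.mono_neutral_left) (use black in \<open>auto simp: white_squares_def\<close>)
  also have "\<dots> = cross_balance e m n (fst (w a)) (snd (w a))"
    using sum_cross_sign_grid[OF white_squares_bounds(1-4)[OF bij a], of e] by simp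
  finally show ?thesis .
qed

lemma sum_diff_pred_atLeastLessThan:
  fixes f :: "nat \<Rightarrow> 'a::ab_group_add"
  shows "1 \<le> j \<Longrightarrow> (\<Sum>k\<in>{1..<j}. f k - f (k - 1)) = f (j - 1) - f 0"
  by (induction j) auto

lemma sum_diff_pred_greaterThanAtMost:
  fixes f :: "nat \<Rightarrow> 'a::ab_group_add"
  shows "j \<le> n \<Longrightarrow> (\<Sum>k\<in>{j<..n}. f k - f (k - 1)) = f n - f j"
proof (induction n)
  case (Suc n)
  show ?case
  proof (cases "j = Suc n")
    case False
    then have "{j<..Suc n} = insert (Suc n) {j<..n}" "Suc n \<notin> {j<..n}" using Suc.prems by auto
    then show ?thesis using Suc False by simp
  qed simp
qed simp

lemma cross_balance_telescope:
  assumes i: "1 \<le> i" "i \<le> m" and j: "1 \<le> j" "j \<le> n"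
    and eh: "\<And>i' j'. 1 \<le> i' \<Longrightarrow> i' \<le> m \<Longrightarrow> 1 \<le> j' \<Longrightarrow> j' \<le> n \<Longrightarrow> e i' j' = h i' j' - h i' (j' - 1)"
    and ev: "\<And>i' j'. 1 \<le> i' \<Longrightarrow> i' \<le> m \<Longrightarrow> 1 \<le> j' \<Longrightarrow> j' \<le> n \<Longrightarrow> e i' j' = v (i' - 1) j' - v i' j'"
  shows "cross_balance e m n i j
    = h i (j - 1) + h i j - v (i - 1) j - v i j + (v 0 j + v m j) - (h i 0 + h i n)"
proof -
  have "(\<Sum>i'\<in>{1..<i}. e i' j) = (\<Sum>k\<in>{1..<i}. (- v k j) - (- v (k - 1) j))"
    "(\<Sum>i'\<in>{i<..m}. e i' j) = (\<Sum>k\<in>{i<..m}. (- v k j) - (- v (k - 1) j))"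
    using i j by (intro sum.cong refl; simp add: ev)+
  moreover have "(\<Sum>j'\<in>{1..<j}. e i j') = (\<Sum>k\<in>{1..<j}. h i k - h i (k - 1))"
    "(\<Sum>j'\<in>{j<..n}. e i j') = (\<Sum>k\<in>{j<..n}. h i k - h i (k - 1))"
    using i j by (intro sum.cong refl; simp add: eh)+
  ultimately show ?thesis
    unfolding cross_balance_def
    using sum_diff_pred_atLeastLessThan[OF i(1), of "\<lambda>k. - v k j"]
      sum_diff_pred_atLeastLessThan[OF j(1), of "h i"]
      sum_diff_pred_greaterThanAtMost[OF i(2), of "\<lambda>k. - v k j"]
      sum_diff_pred_greaterThanAtMost[OF j(2), of "h i"]
    by simp
qed

subsection \<open>The isomorphism\<close>

definition square_increments ::
    "(nat \<Rightarrow> nat \<Rightarrow> bool) \<Rightarrow> nat \<Rightarrow> nat \<Rightarrow> (nat \<Rightarrow> nat \<times> nat) \<Rightarrow> rat vec \<Rightarrow> rat vec" where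
  "square_increments D m N w x = vec N (\<lambda>a.
     hor_val D m x (fst (w a)) (snd (w a)) - hor_val D m x (fst (w a)) (snd (w a) - 1))"

lemma dim_vec_square_increments [simp]: "dim_vec (square_increments D m N w x) = N"
  by (simp add: square_increments_def)

lemma square_increments_carrier [simp]: "square_increments D m N w x \<in> carrier_vec N"
  by (simp add: square_increments_def)

lemma square_increments_in_kernel:
  assumes bij: "bij_betw w {0..<N} (white_squares D m n)"
    and bd: "boundary_cancels m n (hor_val D m x) (ver_val D m x)"
  shows "square_increments D m N w x \<in> mat_kernel (diagram_matrix N w)"
proof -
  let ?h = "hor_val D m x" and ?v = "ver_val D m x"
  let ?e = "\<lambda>i j. ?h i j - ?h i (j - 1)"
  have cr: "crossing_rules D m n ?h ?v" by (rule crossing_rules_pipe_values)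
  have "(diagram_matrix N w *\<^sub>v square_increments D m N w x) $ a = 0" if a: "a < N" for a
  proof -
    obtain i j where wa: "w a = (i, j)" by (cases "w a")
    have ij: "1 \<le> i" "i \<le> m" "1 \<le> j" "j \<le> n" "\<not> D i j"
      using white_squares_bounds[OF bij a] wa by auto
    have "(diagram_matrix N w *\<^sub>v square_increments D m N w x) $ a = cross_balance ?e m n i j"
      using diagram_matrix_mult_vec_index[OF bij square_increments_carrier, of ?e, OF _ _ a] wa
        crossing_rulesD(1)[OF cr] by (auto simp: square_increments_def)
    also have "\<dots> = ?h i (j - 1) + ?h i j - ?v (i - 1) j - ?v i j + (?v 0 j + ?v m j) - (?h i 0 + ?h i n)"
      by (rule cross_balance_telescope[OF ij(1-4)]) (use crossing_rules_diff_eq[OF cr] in auto)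
    also have "\<dots> = 0"
      using bd ij crossing_rulesD(2)[OF cr ij(1-4)] unfolding boundary_cancels_def by auto
    finally show ?thesis .
  qed
  then show ?thesis
    by (intro mat_kernelI[OF diagram_matrix_carrier square_increments_carrier]) (auto intro!: eq_vecI)
qed

lemma hor_val_add:
  assumes "1 \<le> m" "x \<in> carrier_vec (m + n)" "y \<in> carrier_vec (m + n)" "i \<le> m" "j \<le> n"
  shows "hor_val D m (x + y) i j = hor_val D m x i j + hor_val D m y i j"
  using assms pipe_exit_range[of m i j n D False] by (auto simp: hor_val_def)

lemma hor_val_smult:
  assumes "1 \<le> m" "x \<in> carrier_vec (m + n)" "i \<le> m" "j \<le> n"
  shows "hor_val D m (c \<cdot>\<^sub>v x) i j = c * hor_val D m x i j"
  using assms pipe_exit_range[of m i j n D False] by (auto simp: hor_val_def)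

lemma square_increments_add:
  assumes m: "1 \<le> m" and bij: "bij_betw w {0..<N} (white_squares D m n)"
    and x: "x \<in> carrier_vec (m + n)" and y: "y \<in> carrier_vec (m + n)"
  shows "square_increments D m N w (x + y) = square_increments D m N w x + square_increments D m N w y"
proof (rule eq_vecI)
  fix a assume "a < dim_vec (square_increments D m N w x + square_increments D m N w y)"
  then have a: "a < N" by simp
  note wa = white_squares_bounds[OF bij a]
  show "square_increments D m N w (x + y) $ a = (square_increments D m N w x + square_increments D m N w y) $ a"
    using a wa hor_val_add[OF m x y, of "fst (w a)" "snd (w a)" D]
      hor_val_add[OF m x y, of "fst (w a)" "snd (w a) - 1" D]
    by (simp add: square_increments_def)
qed simp

lemma square_increments_smult:
  assumes m: "1 \<le> m" and bij: "bij_betw w {0..<N} (white_squares D m n)"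
    and x: "x \<in> carrier_vec (m + n)"
  shows "square_increments D m N w (c \<cdot>\<^sub>v x) = c \<cdot>\<^sub>v square_increments D m N w x"
proof (rule eq_vecI)
  fix a assume "a < dim_vec (c \<cdot>\<^sub>v square_increments D m N w x)"
  then have a: "a < N" by simp
  note wa = white_squares_bounds[OF bij a]
  show "square_increments D m N w (c \<cdot>\<^sub>v x) $ a = (c \<cdot>\<^sub>v square_increments D m N w x) $ a"
    using a wa hor_val_smult[OF m x, of "fst (w a)" "snd (w a)" D c]
      hor_val_smult[OF m x, of "fst (w a)" "snd (w a) - 1" D c]
    by (simp add: square_increments_def algebra_simps)
qed simp

lemma zero_if_constant_and_ends_cancel:
  fixes g :: "nat \<Rightarrow> 'a::field_char_0"
  assumes "\<forall>j. 1 \<le> j \<and> j \<le> n \<longrightarrow> g j = g (j - 1)" and "g 0 + g n = 0"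
  shows "g 0 = 0"
proof -
  from assms(1) have "g n = g 0" by (induction n) auto
  with assms(2) show ?thesis by simp
qed

lemma eq_if_boundary_values_eq:
  assumes x: "x \<in> carrier_vec (m + n)" and y: "y \<in> carrier_vec (m + n)"
    and "\<And>i. 1 \<le> i \<Longrightarrow> i \<le> m \<Longrightarrow> hor_val D m x i 0 = hor_val D m y i 0"
    and "\<And>j. 1 \<le> j \<Longrightarrow> j \<le> n \<Longrightarrow> ver_val D m x 0 j = ver_val D m y 0 j"
  shows "x = y"
proof (rule eq_vecI)
  fix l assume "l < dim_vec y"
  with y have l: "l < m + n" by simp
  show "x $ l = y $ l"
  proof (cases "l < m")
    case True
    then show ?thesis using assms(3)[of "m - l"] hor_val_left[of "m - l" D m] by simp
  next
    case False
    then have "m + (l + 1 - m) - 1 = l" using l by auto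
    then show ?thesis using False l assms(4)[of "l + 1 - m"] ver_val_top[of "l + 1 - m" D m] by simp
  qed
qed (use x y in simp)

lemma square_increments_inj:
  assumes bij: "bij_betw w {0..<N} (white_squares D m n)"
    and x: "x \<in> carrier_vec (m + n)" and y: "y \<in> carrier_vec (m + n)"
    and bx: "boundary_cancels m n (hor_val D m x) (ver_val D m x)"
    and "by": "boundary_cancels m n (hor_val D m y) (ver_val D m y)"
    and eq: "square_increments D m N w x = square_increments D m N w y"
  shows "x = y"
proof -
  let ?hx = "hor_val D m x" and ?vx = "ver_val D m x" and ?hy = "hor_val D m y" and ?vy = "ver_val D m y"
  have crx: "crossing_rules D m n ?hx ?vx" and cry: "crossing_rules D m n ?hy ?vy"
    by (rule crossing_rules_pipe_values)+
  have incr: "?hx i j - ?hx i (j - 1) = ?hy i j - ?hy i (j - 1)"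
    if ij: "1 \<le> i" "i \<le> m" "1 \<le> j" "j \<le> n" for i j
  proof (cases "D i j")
    case True
    then show ?thesis using crossing_rulesD(1)[OF crx ij True] crossing_rulesD(1)[OF cry ij True] by simp
  next
    case False
    with ij have "(i, j) \<in> w ` {0..<N}" using bij by (simp add: bij_betw_def white_squares_def)
    then obtain a where a: "a < N" "w a = (i, j)" by auto
    have "square_increments D m N w x $ a = square_increments D m N w y $ a" using eq by simp
    with a show ?thesis by (simp add: square_increments_def)
  qed
  have left: "?hx i 0 = ?hy i 0" if i: "1 \<le> i" "i \<le> m" for i
  proof -
    have "\<forall>j. 1 \<le> j \<and> j \<le> n \<longrightarrow> ?hx i j - ?hy i j = ?hx i (j - 1) - ?hy i (j - 1)"
      using incr[OF i] by fastforce
    moreover have "?hx i 0 + ?hx i n = 0" "?hy i 0 + ?hy i n = 0"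
      using bx "by" i by (simp_all add: boundary_cancels_def)
    ultimately have "?hx i 0 - ?hy i 0 = 0"
      by (intro zero_if_constant_and_ends_cancel[of n "\<lambda>j. ?hx i j - ?hy i j"]) auto
    then show ?thesis by simp
  qed
  have top: "?vx 0 j = ?vy 0 j" if j: "1 \<le> j" "j \<le> n" for j
  proof -
    have "?vx i j - ?vy i j = ?vx (i - 1) j - ?vy (i - 1) j" if "1 \<le> i" "i \<le> m" for i
      using incr[OF that j] crossing_rules_diff_eq[OF crx that j] crossing_rules_diff_eq[OF cry that j]
      by simp
    moreover have "?vx 0 j + ?vx m j = 0" "?vy 0 j + ?vy m j = 0"
      using bx "by" j by (simp_all add: boundary_cancels_def)
    ultimately have "?vx 0 j - ?vy 0 j = 0"
      by (intro zero_if_constant_and_ends_cancel[of m "\<lambda>i. ?vx i j - ?vy i j"]) auto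
    then show ?thesis by simp
  qed
  show "x = y"
    using eq_if_boundary_values_eq[OF x y] left top by blast
qed

text \<open>Entry \<open>l - 1\<close> holds the value at boundary label \<open>l\<close>: the left ends of the rows for
  \<open>l \<le> m\<close>, the tops of the columns for \<open>l > m\<close>.\<close>

definition boundary_vector :: "nat \<Rightarrow> nat \<Rightarrow> (nat \<Rightarrow> nat \<Rightarrow> rat) \<Rightarrow> (nat \<Rightarrow> nat \<Rightarrow> rat) \<Rightarrow> rat vec" where
  "boundary_vector m n h v = vec (m + n) (\<lambda>l. if l < m then h (m - l) 0 else v 0 (l + 1 - m))"

lemma pipe_exit_boundary_vector:
  assumes m: "1 \<le> m" and cr: "crossing_rules D m n h v"
  shows "i \<le> m \<Longrightarrow> j \<le> n \<Longrightarrow> (if up then 1 \<le> j else 1 \<le> i) \<Longrightarrow>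
    boundary_vector m n h v $ (pipe_exit D m i j up - 1) = (if up then v i j else h i j)"
proof (induction "i + j" arbitrary: i j up rule: less_induct)
  case less
  consider "i = 0" | "i \<noteq> 0" "j = 0" | "i \<noteq> 0" "j \<noteq> 0" by blast
  then show ?case
  proof cases
    case 1
    with less.prems have up: "up" by (cases up) auto
    with 1 less.prems have "m + j - 1 < m + n" "\<not> m + j - 1 < m" "m + j - 1 + 1 - m = j"
      using m by auto
    with 1 up show ?thesis by (simp add: pipe_exit_top boundary_vector_def)
  next
    case 2
    with less.prems have up: "\<not> up" by (cases up) auto
    from 2 less.prems m have "m - i < m + n" "m - i < m" "m - (m - i) = i" by auto
    with 2 up show ?thesis by (simp add: pipe_exit_left boundary_vector_def)
  next
    case 3
    with less.prems have ij: "1 \<le> i" "i \<le> m" "1 \<le> j" "j \<le> n" by auto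
    have "boundary_vector m n h v $ (pipe_exit D m (i - 1) j True - 1) = v (i - 1) j"
      using less.hyps[of "i - 1" j True] ij by simp
    moreover have "boundary_vector m n h v $ (pipe_exit D m i (j - 1) False - 1) = h i (j - 1)"
      using less.hyps[of i "j - 1" False] ij by simp
    ultimately show ?thesis
      using crossing_rulesD[OF cr ij] 3 by (cases up; cases "D i j") (auto simp: pipe_exit_square)
  qed
qed

lemma hor_val_boundary_vector:
  "1 \<le> m \<Longrightarrow> crossing_rules D m n h v \<Longrightarrow> 1 \<le> i \<Longrightarrow> i \<le> m \<Longrightarrow> j \<le> n \<Longrightarrow>
    hor_val D m (boundary_vector m n h v) i j = h i j"
  using pipe_exit_boundary_vector[of m D n h v i j False] by (simp add: hor_val_def)

lemma ver_val_boundary_vector: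
  "1 \<le> m \<Longrightarrow> crossing_rules D m n h v \<Longrightarrow> i \<le> m \<Longrightarrow> 1 \<le> j \<Longrightarrow> j \<le> n \<Longrightarrow>
    ver_val D m (boundary_vector m n h v) i j = v i j"
  using pipe_exit_boundary_vector[of m D n h v i j True] by (simp add: ver_val_def)

lemma crossing_rules_if_cross_balance_zero:
  assumes eh: "\<And>i j. 1 \<le> j \<Longrightarrow> e i j = h i j - h i (j - 1)"
    and ev: "\<And>i j. 1 \<le> i \<Longrightarrow> e i j = v (i - 1) j - v i j"
    and bd: "boundary_cancels m n h v"
    and black: "\<And>i j. 1 \<le> i \<Longrightarrow> i \<le> m \<Longrightarrow> 1 \<le> j \<Longrightarrow> j \<le> n \<Longrightarrow> D i j \<Longrightarrow> e i j = 0"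
    and white: "\<And>i j. 1 \<le> i \<Longrightarrow> i \<le> m \<Longrightarrow> 1 \<le> j \<Longrightarrow> j \<le> n \<Longrightarrow> \<not> D i j \<Longrightarrow>
      cross_balance e m n i j = 0"
  shows "crossing_rules D m n h v"
  unfolding crossing_rules_def
proof (intro allI impI)
  fix i j assume "1 \<le> i \<and> i \<le> m \<and> 1 \<le> j \<and> j \<le> n"
  then have ij: "1 \<le> i" "i \<le> m" "1 \<le> j" "j \<le> n" by auto
  have incr: "h i j - h i (j - 1) = v (i - 1) j - v i j" using eh[of j i] ev[of i j] ij by simp
  show "if D i j then h i j = h i (j - 1) \<and> v (i - 1) j = v i j
        else v i j = h i (j - 1) \<and> v (i - 1) j = h i j"
  proof (cases "D i j")
    case True
    with black[OF ij] eh[of j i] incr ij show ?thesis by simp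
  next
    case False
    have "0 = cross_balance e m n i j" using white[OF ij False] by simp
    also have "\<dots> = h i (j - 1) + h i j - v (i - 1) j - v i j + (v 0 j + v m j) - (h i 0 + h i n)"
      using ij by (intro cross_balance_telescope; blast intro: eh ev)
    finally have "h i (j - 1) + h i j - v (i - 1) j - v i j = 0"
      using bd ij unfolding boundary_cancels_def by auto
    with incr False show ?thesis by (auto simp: algebra_simps)
  qed
qed

lemma crossing_labelling_of_diagram_kernel:
  fixes N :: nat
  assumes bij: "bij_betw w {0..<N} (white_squares D m n)"
    and d: "d \<in> mat_kernel (diagram_matrix N w)"
  obtains h v where "crossing_rules D m n h v" "boundary_cancels m n h v"
    "\<And>a. a < N \<Longrightarrow> h (fst (w a)) (snd (w a)) - h (fst (w a)) (snd (w a) - 1) = d $ a"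
proof -
  let ?W = "white_squares D m n"
  have dc: "d \<in> carrier_vec N" and Md: "diagram_matrix N w *\<^sub>v d = 0\<^sub>v N"
    using mat_kernelD[OF diagram_matrix_carrier d] by auto
  define e where "e i j = (if (i, j) \<in> ?W then d $ inv_into {0..<N} w (i, j) else 0)" for i j
  define h where "h i j = - (\<Sum>j'\<in>{1..n}. e i j') / 2 + (\<Sum>j'\<in>{1..j}. e i j')" for i j
  define v where "v i j = (\<Sum>i'\<in>{1..m}. e i' j) / 2 - (\<Sum>i'\<in>{1..i}. e i' j)" for i j
  have eh: "e i j = h i j - h i (j - 1)" if "1 \<le> j" for i j
    using that by (cases j) (simp_all add: h_def)
  have ev: "e i j = v (i - 1) j - v i j" if "1 \<le> i" for i j
    using that by (cases i) (simp_all add: v_def)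
  have bd: "boundary_cancels m n h v"
    by (simp add: boundary_cancels_def h_def v_def)
  have white: "\<forall>b<N. e (fst (w b)) (snd (w b)) = d $ b"
    using bij bij_betwE[OF bij] by (auto simp: e_def bij_betw_def inv_into_f_f)
  have black: "e i j = 0" if "D i j" for i j
    using that by (simp add: e_def white_squares_def)
  have balance_zero: "cross_balance e m n i j = 0"
    if "1 \<le> i" "i \<le> m" "1 \<le> j" "j \<le> n" "\<not> D i j" for i j
  proof -
    from that have "(i, j) \<in> w ` {0..<N}" using bij by (simp add: bij_betw_def white_squares_def)
    then obtain a where a: "a < N" "w a = (i, j)" by auto
    have "cross_balance e m n i j = (diagram_matrix N w *\<^sub>v d) $ a"
      using diagram_matrix_mult_vec_index[OF bij dc white _ a(1)] black a(2) by simp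
    also have "\<dots> = 0" using Md a by simp
    finally show ?thesis .
  qed
  have "crossing_rules D m n h v"
    using crossing_rules_if_cross_balance_zero[OF eh ev bd black balance_zero] .
  moreover have "h (fst (w a)) (snd (w a)) - h (fst (w a)) (snd (w a) - 1) = d $ a" if "a < N" for a
    using eh[OF white_squares_bounds(3)[OF bij that], symmetric] white that by simp
  ultimately show ?thesis using bd that by blast
qed

lemma square_increments_surj:
  fixes N :: nat
  assumes m: "1 \<le> m" and bij: "bij_betw w {0..<N} (white_squares D m n)"
    and d: "d \<in> mat_kernel (diagram_matrix N w)"
  shows "\<exists>x \<in> mat_kernel (pipe_matrix D m n). square_increments D m N w x = d"
proof -
  obtain h v where cr: "crossing_rules D m n h v" and bd: "boundary_cancels m n h v"
    and incr: "\<And>a. a < N \<Longrightarrow> h (fst (w a)) (snd (w a)) - h (fst (w a)) (snd (w a) - 1) = d $ a"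
    using crossing_labelling_of_diagram_kernel[OF bij d] by blast
  define x where "x = boundary_vector m n h v"
  have x: "x \<in> carrier_vec (m + n)" by (simp add: x_def boundary_vector_def)
  have hx: "hor_val D m x i j = h i j" if "1 \<le> i" "i \<le> m" "j \<le> n" for i j
    unfolding x_def using hor_val_boundary_vector[OF m cr that] .
  have vx: "ver_val D m x i j = v i j" if "i \<le> m" "1 \<le> j" "j \<le> n" for i j
    unfolding x_def using ver_val_boundary_vector[OF m cr that] .
  have "boundary_cancels m n (hor_val D m x) (ver_val D m x)"
    using bd m by (simp add: boundary_cancels_def hx vx)
  then have "x \<in> mat_kernel (pipe_matrix D m n)"
    using mat_kernel_pipe_matrix_iff[OF m x] by simp
  moreover have "square_increments D m N w x = d"
  proof (rule eq_vecI)
    fix a assume "a < dim_vec d"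
    then have a: "a < N" using mat_kernelD(1)[OF diagram_matrix_carrier d] by simp
    note wa = white_squares_bounds[OF bij a]
    show "square_increments D m N w x $ a = d $ a"
      using a wa incr[OF a] by (simp add: square_increments_def hx)
  qed (use mat_kernelD(1)[OF diagram_matrix_carrier d] in simp)
  ultimately show ?thesis by blast
qed

lemma bij_betw_square_increments:
  fixes N :: nat
  assumes m: "1 \<le> m" and bij: "bij_betw w {0..<N} (white_squares D m n)"
  shows "bij_betw (square_increments D m N w) (mat_kernel (pipe_matrix D m n)) (mat_kernel (diagram_matrix N w))"
proof -
  have ker: "x \<in> carrier_vec (m + n) \<and> boundary_cancels m n (hor_val D m x) (ver_val D m x)"
    if "x \<in> mat_kernel (pipe_matrix D m n)" for x
    using that mat_kernelD(1)[OF pipe_matrix_carrier that] mat_kernel_pipe_matrix_iff[OF m] by blast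
  show ?thesis
    unfolding bij_betw_def inj_on_def
    using ker square_increments_inj[OF bij] square_increments_in_kernel[OF bij]
      square_increments_surj[OF m bij] by blast
qed

theorem theorem4p6:
  fixes m n N :: nat and D :: "nat \<Rightarrow> nat \<Rightarrow> bool" and w :: "nat \<Rightarrow> nat \<times> nat"
  assumes "m \<ge> 1" and "n \<ge> 1"
    and "bij_betw w {0..<N} (white_squares D m n)"
  shows "(\<exists>f. bij_betw f (mat_kernel (perm_matrix (m + n) (omega_perm m n)
                                      + perm_matrix (m + n) (restricted_perm D m n)))
                          (mat_kernel (diagram_matrix N w))
            \<and> (\<forall>x \<in> mat_kernel (perm_matrix (m + n) (omega_perm m n)
                                      + perm_matrix (m + n) (restricted_perm D m n)).
                \<forall>y \<in> mat_kernel (perm_matrix (m + n) (omega_perm m n)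
                                      + perm_matrix (m + n) (restricted_perm D m n)).
                   f (x + y) = f x + f y)
            \<and> (\<forall>c. \<forall>x \<in> mat_kernel (perm_matrix (m + n) (omega_perm m n)
                                      + perm_matrix (m + n) (restricted_perm D m n)).
                   f (c \<cdot>\<^sub>v x) = c \<cdot>\<^sub>v f x))
         \<and> kernel_dim (perm_matrix (m + n) (omega_perm m n)
                       + perm_matrix (m + n) (restricted_perm D m n))
           = kernel_dim (diagram_matrix N w)"
proof -
  let ?f = "square_increments D m N w"
  have bij: "bij_betw ?f (mat_kernel (pipe_matrix D m n)) (mat_kernel (diagram_matrix N w))"
    using bij_betw_square_increments assms(1,3) .
  have carrier: "mat_kernel (pipe_matrix D m n) \<subseteq> carrier_vec (m + n)"
    by (rule mat_kernel_carrier[OF pipe_matrix_carrier])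
  have add: "\<forall>x \<in> mat_kernel (pipe_matrix D m n). \<forall>y \<in> mat_kernel (pipe_matrix D m n).
      ?f (x + y) = ?f x + ?f y"
    using square_increments_add[OF assms(1,3)] carrier by blast
  have smult: "\<forall>c. \<forall>x \<in> mat_kernel (pipe_matrix D m n). ?f (c \<cdot>\<^sub>v x) = c \<cdot>\<^sub>v ?f x"
    using square_increments_smult[OF assms(1,3)] carrier by blast
  show ?thesis
    using kernel_dim_eq_if_linear_bij_betw[OF pipe_matrix_carrier diagram_matrix_carrier bij add smult]
      bij add smult by blast
qed

end
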